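(* The Lie algebra $\operatorname{Ker}\psi_1$, with the bracket $[(a,\gamma),(b,\varepsilon)]=(b,\varepsilon^{(a,\gamma)})-(a,\gamma^{(b,\varepsilon)})$, is isomorphic to the Lie algebra $\operatorname{Der}_{E^e}(\Lambda)$ of derivations of $\Lambda$ which are $E$-bimodule morphisms, with the commutator bracket.
   Context: Let $k$ be an algebraically closed field and $Q$ a finite quiver; $Q_n$ is the set of paths of length $n$ ($Q_0$ = vertices, $Q_1$ = arrows), $s(\gamma),t(\gamma)$ are source and terminus of a path $\gamma$; in $kQ$, $\beta\alpha$ is the concatenation "first $\alpha$, then $\beta$" if $t(\alpha)=s(\beta)$, and $0$ otherwise. Let $Z$ be a minimal set of paths of length $\ge 2$ (no proper subpath of an element of $Z$ lies in $Z$) such that $\Lambda=kQ/\langle Z\rangle$ is finite dimensional, and let $E\subset\Lambda$ be the subalgebra spanned by the (classes of the) vertices. Let $B$ be the set of paths (vertices included) not containing any element of $Z$ as a subpath; its classes form a basis of $\Lambda$. Paths are parallel if they have the same source and terminus; for sets of paths $X,Y$, $X//Y$ is the set of pairs $(\varepsilon,\gamma)\in X\times Y$ of parallel paths and $k(X//Y)$ the vector space with basis $X//Y$. For a path $\varepsilon$ and $(a,\gamma)\in Q_1//B$, $\varepsilon^{(a,\gamma)}$ is the sum of all paths in $B$ obtained by replacing one occurrence of $a$ in $\varepsilon$ by $\gamma$ ($0$ if none); if $\varepsilon^{(a,\gamma)}=\sum_i\varepsilon_i$ and $\eta$ is parallel to $\varepsilon$, $(\eta,\varepsilon^{(a,\gamma)}):=\sum_i(\eta,\varepsilon_i)$.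 The map $\psi_1:k(Q_1//B)\to k(Z//B)$ is $(a,\gamma)\mapsto\sum_{p\in Z}(p,p^{(a,\gamma)})$, and the bracket on $k(Q_1//B)$ is extended bilinearly from basis elements; $\operatorname{Ker}\psi_1$ is closed under it. *)

theory Defs
  imports "HOL-Computational_Algebra.Polynomial"
begin

text \<open>A finite quiver is given by a finite type of vertices 'v, a finite type of
arrows 'a, and source/terminus maps src tgt :: 'a => 'v.
A path is a pair (v, as): its source vertex v and the list of its arrows in the
order in which they are traversed.  (v, []) is the trivial path at v.\<close>

type_synonym ('v,'a) path = "'v \<times> 'a list"

definition is_path :: "('a \<Rightarrow> 'v) \<Rightarrow> ('a \<Rightarrow> 'v) \<Rightarrow> ('v,'a) path \<Rightarrow> bool" where
  "is_path src tgt p \<longleftrightarrow>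
     (case p of (v, as) \<Rightarrow>
        (as \<noteq> [] \<longrightarrow> src (hd as) = v) \<and>
        (\<forall>i. Suc i < length as \<longrightarrow> tgt (as ! i) = src (as ! Suc i)))"

definition psrc :: "('v,'a) path \<Rightarrow> 'v" where
  "psrc p = fst p"

definition ptgt :: "('a \<Rightarrow> 'v) \<Rightarrow> ('v,'a) path \<Rightarrow> 'v" where
  "ptgt tgt p = (if snd p = [] then fst p else tgt (last (snd p)))"

definition plen :: "('v,'a) path \<Rightarrow> nat" where
  "plen p = length (snd p)"

text \<open>Concatenation beta alpha: first alpha, then beta (meaningful if t(alpha) = s(beta)).\<close>
definition pcat :: "('v,'a) path \<Rightarrow> ('v,'a) path \<Rightarrow> ('v,'a) path" where
  "pcat \<beta> \<alpha> = (fst \<alpha>, snd \<alpha> @ snd \<beta>)"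

definition arrow_path :: "('a \<Rightarrow> 'v) \<Rightarrow> 'a \<Rightarrow> ('v,'a) path" where
  "arrow_path src a = (src a, [a])"

definition parallel :: "('a \<Rightarrow> 'v) \<Rightarrow> ('v,'a) path \<Rightarrow> ('v,'a) path \<Rightarrow> bool" where
  "parallel tgt p q \<longleftrightarrow> psrc p = psrc q \<and> ptgt tgt p = ptgt tgt q"

definition subpath :: "('a \<Rightarrow> 'v) \<Rightarrow> ('a \<Rightarrow> 'v) \<Rightarrow> ('v,'a) path \<Rightarrow> ('v,'a) path \<Rightarrow> bool" where
  "subpath src tgt \<gamma> \<delta> \<longleftrightarrow>
     (\<exists>\<rho> \<sigma>. is_path src tgt \<rho> \<and> is_path src tgt \<sigma> \<and>
        ptgt tgt \<sigma> = psrc \<gamma> \<and> ptgt tgt \<gamma> = psrc \<rho> \<and> \<delta> = pcat \<rho> (pcat \<gamma> \<sigma>))"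

definition minimal_relations :: "('a \<Rightarrow> 'v) \<Rightarrow> ('a \<Rightarrow> 'v) \<Rightarrow> ('v,'a) path set \<Rightarrow> bool" where
  "minimal_relations src tgt Z \<longleftrightarrow>
     (\<forall>p\<in>Z. is_path src tgt p \<and> plen p \<ge> 2) \<and>
     (\<forall>p\<in>Z. \<forall>q\<in>Z. subpath src tgt q p \<longrightarrow> q = p)"

definition Bpaths :: "('a \<Rightarrow> 'v) \<Rightarrow> ('a \<Rightarrow> 'v) \<Rightarrow> ('v,'a) path set \<Rightarrow> ('v,'a) path set" where
  "Bpaths src tgt Z = {p. is_path src tgt p \<and> (\<forall>z\<in>Z. \<not> subpath src tgt z p)}"

text \<open>The monomial algebra Lambda = kQ/<Z>, realised on its basis B:
elements are coefficient functions supported on B, and the product of two basis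
paths is their concatenation if defined and in B, and 0 otherwise.\<close>
definition Lam :: "('a \<Rightarrow> 'v) \<Rightarrow> ('a \<Rightarrow> 'v) \<Rightarrow> ('v,'a) path set \<Rightarrow> (('v,'a) path \<Rightarrow> 'k::field) set" where
  "Lam src tgt Z = {x. \<forall>p. p \<notin> Bpaths src tgt Z \<longrightarrow> x p = 0}"

definition lam_mult :: "('a \<Rightarrow> 'v) \<Rightarrow> ('a \<Rightarrow> 'v) \<Rightarrow> ('v,'a) path set \<Rightarrow>
    (('v,'a) path \<Rightarrow> 'k::field) \<Rightarrow> (('v,'a) path \<Rightarrow> 'k) \<Rightarrow> (('v,'a) path \<Rightarrow> 'k)" where
  "lam_mult src tgt Z x y = (\<lambda>\<delta>.
     if \<delta> \<in> Bpaths src tgt Z then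
       (\<Sum>(\<beta>,\<alpha>)\<in>{(\<beta>,\<alpha>). \<beta> \<in> Bpaths src tgt Z \<and> \<alpha> \<in> Bpaths src tgt Z \<and>
                         ptgt tgt \<alpha> = psrc \<beta> \<and> pcat \<beta> \<alpha> = \<delta>}. x \<beta> * y \<alpha>)
     else 0)"

definition vtx :: "'v \<Rightarrow> (('v,'a) path \<Rightarrow> 'k::field)" where
  "vtx v = (\<lambda>p. if p = (v, []) then 1 else 0)"

text \<open>Der_{E^e}(Lambda): k-linear derivations of Lambda which are E-bimodule maps.
They are represented as functions that vanish outside Lambda (extensional).\<close>
definition Der_E :: "('a \<Rightarrow> 'v) \<Rightarrow> ('a \<Rightarrow> 'v) \<Rightarrow> ('v,'a) path set \<Rightarrow>
    ((('v,'a) path \<Rightarrow> 'k::field) \<Rightarrow> (('v,'a) path \<Rightarrow> 'k)) set" where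
  "Der_E src tgt Z = {D.
     (\<forall>x\<in>Lam src tgt Z. D x \<in> Lam src tgt Z) \<and>
     (\<forall>x. x \<notin> Lam src tgt Z \<longrightarrow> D x = (\<lambda>_. 0)) \<and>
     (\<forall>x\<in>Lam src tgt Z. \<forall>y\<in>Lam src tgt Z. D (\<lambda>p. x p + y p) = (\<lambda>p. D x p + D y p)) \<and>
     (\<forall>c. \<forall>x\<in>Lam src tgt Z. D (\<lambda>p. c * x p) = (\<lambda>p. c * D x p)) \<and>
     (\<forall>x\<in>Lam src tgt Z. \<forall>y\<in>Lam src tgt Z.
        D (lam_mult src tgt Z x y) =
          (\<lambda>p. lam_mult src tgt Z (D x) y p + lam_mult src tgt Z x (D y) p)) \<and>
     (\<forall>v. \<forall>x\<in>Lam src tgt Z.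
        D (lam_mult src tgt Z (vtx v) x) = lam_mult src tgt Z (vtx v) (D x) \<and>
        D (lam_mult src tgt Z x (vtx v)) = lam_mult src tgt Z (D x) (vtx v))}"

definition commutator :: "(('p \<Rightarrow> 'k::field) \<Rightarrow> ('p \<Rightarrow> 'k)) \<Rightarrow> (('p \<Rightarrow> 'k) \<Rightarrow> ('p \<Rightarrow> 'k)) \<Rightarrow>
    (('p \<Rightarrow> 'k) \<Rightarrow> ('p \<Rightarrow> 'k))" where
  "commutator D1 D2 = (\<lambda>x p. D1 (D2 x) p - D2 (D1 x) p)"

definition Q1B :: "('a \<Rightarrow> 'v) \<Rightarrow> ('a \<Rightarrow> 'v) \<Rightarrow> ('v,'a) path set \<Rightarrow> ('a \<times> ('v,'a) path) set" where
  "Q1B src tgt Z = {(a, \<gamma>). \<gamma> \<in> Bpaths src tgt Z \<and> parallel tgt (arrow_path src a) \<gamma>}"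

definition replace_at :: "('v,'a) path \<Rightarrow> nat \<Rightarrow> ('v,'a) path \<Rightarrow> ('v,'a) path" where
  "replace_at \<epsilon> i \<gamma> = (fst \<epsilon>, take i (snd \<epsilon>) @ snd \<gamma> @ drop (Suc i) (snd \<epsilon>))"

text \<open>eps^(a,gamma): the sum of all paths in B obtained by replacing one occurrence of
a in eps by gamma, as a coefficient function on paths (counted with multiplicity).\<close>
definition repl :: "('a \<Rightarrow> 'v) \<Rightarrow> ('a \<Rightarrow> 'v) \<Rightarrow> ('v,'a) path set \<Rightarrow>
    ('v,'a) path \<Rightarrow> 'a \<Rightarrow> ('v,'a) path \<Rightarrow> (('v,'a) path \<Rightarrow> 'k::field)" where
  "repl src tgt Z \<epsilon> a \<gamma> = (\<lambda>\<delta>. of_nat (card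
     {i. i < length (snd \<epsilon>) \<and> snd \<epsilon> ! i = a \<and> replace_at \<epsilon> i \<gamma> = \<delta> \<and>
         \<delta> \<in> Bpaths src tgt Z}))"

definition kQ1B :: "('a \<Rightarrow> 'v) \<Rightarrow> ('a \<Rightarrow> 'v) \<Rightarrow> ('v,'a) path set \<Rightarrow> ('a \<times> ('v,'a) path \<Rightarrow> 'k::field) set" where
  "kQ1B src tgt Z = {f. \<forall>q. q \<notin> Q1B src tgt Z \<longrightarrow> f q = 0}"

definition psi1 :: "('a \<Rightarrow> 'v) \<Rightarrow> ('a \<Rightarrow> 'v) \<Rightarrow> ('v,'a) path set \<Rightarrow>
    ('a \<times> ('v,'a) path \<Rightarrow> 'k::field) \<Rightarrow> (('v,'a) path \<times> ('v,'a) path \<Rightarrow> 'k)" where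
  "psi1 src tgt Z f = (\<lambda>(p, \<delta>).
     if p \<in> Z then (\<Sum>(a,\<gamma>)\<in>Q1B src tgt Z. f (a,\<gamma>) * repl src tgt Z p a \<gamma> \<delta>) else 0)"

definition Ker_psi1 :: "('a \<Rightarrow> 'v) \<Rightarrow> ('a \<Rightarrow> 'v) \<Rightarrow> ('v,'a) path set \<Rightarrow> ('a \<times> ('v,'a) path \<Rightarrow> 'k::field) set" where
  "Ker_psi1 src tgt Z = {f \<in> kQ1B src tgt Z. psi1 src tgt Z f = (\<lambda>_. 0)}"

definition bracket :: "('a \<Rightarrow> 'v) \<Rightarrow> ('a \<Rightarrow> 'v) \<Rightarrow> ('v,'a) path set \<Rightarrow>
    ('a \<times> ('v,'a) path \<Rightarrow> 'k::field) \<Rightarrow> ('a \<times> ('v,'a) path \<Rightarrow> 'k) \<Rightarrow> ('a \<times> ('v,'a) path \<Rightarrow> 'k)" where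
  "bracket src tgt Z f g = (\<lambda>(c, \<delta>).
     \<Sum>(a,\<gamma>)\<in>Q1B src tgt Z. \<Sum>(b,\<epsilon>)\<in>Q1B src tgt Z.
        f (a,\<gamma>) * g (b,\<epsilon>) *
          ((if c = b then repl src tgt Z \<epsilon> a \<gamma> \<delta> else 0) -
           (if c = a then repl src tgt Z \<gamma> b \<epsilon> \<delta> else 0)))"

end

theory Submission
  imports Defs
begin

text \<open>
  Arrow data f in k(Q1//B) define a derivation on paths that replaces one arrow at a time,
  p \<mapsto> \<Sum> f(a,\<gamma>) p^(a,\<gamma>). Since replacing an arrow by a parallel path keeps a path a path, this
  satisfies the Leibniz rule on every concatenation of paths, when a path is read as its class
  in \<Lambda> (zero outside B). A path outside B has the form \<rho> z \<sigma> with z in Z, so by the Leibniz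
  rule its image vanishes as soon as the images of the relations do, i.e. when \<psi>1 f = 0;
  then the formula descends to an E-bimodule derivation of \<Lambda>. Conversely, such a derivation
  kills the idempotents, maps each arrow a into paths parallel to a, and by the Leibniz rule is
  determined by these values. Evaluating the commutator of two such derivations on an arrow
  gives the bracket.
\<close>

lemma sum_lessThan_add: "(\<Sum>i<(m::nat) + n. g i) = (\<Sum>i<m. g i) + (\<Sum>j<n. g (m + j))"
  by (induction n) (simp_all add: add.assoc)

section \<open>Paths\<close>

lemma is_path_iff:
  "is_path src tgt (v, as) \<longleftrightarrow>
     (as \<noteq> [] \<longrightarrow> src (hd as) = v) \<and> successively (\<lambda>x y. tgt x = src y) as"
  by (simp add: is_path_def successively_conv_nth)

lemma is_path_Nil [simp]: "is_path src tgt (v, [])"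
  by (simp add: is_path_iff)

lemma is_path_Cons [simp]:
  "is_path src tgt (v, a # as) \<longleftrightarrow> src a = v \<and> is_path src tgt (tgt a, as)"
  by (auto simp: is_path_iff successively_Cons)

lemma ptgt_Nil [simp]: "ptgt tgt (v, []) = v"
  by (simp add: ptgt_def)

lemma ptgt_Cons [simp]: "ptgt tgt (v, a # as) = ptgt tgt (tgt a, as)"
  by (simp add: ptgt_def)

lemma ptgt_append: "ptgt tgt (v, xs @ ys) = ptgt tgt (ptgt tgt (v, xs), ys)"
  by (induction xs arbitrary: v) simp_all

lemma is_path_append:
  "is_path src tgt (v, xs @ ys) \<longleftrightarrow> is_path src tgt (v, xs) \<and> is_path src tgt (ptgt tgt (v, xs), ys)"
  by (induction xs arbitrary: v) auto

lemma psrc_pcat [simp]: "psrc (pcat b a) = psrc a"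
  by (simp add: pcat_def psrc_def)

lemma ptgt_pcat: "ptgt tgt a = psrc b \<Longrightarrow> ptgt tgt (pcat b a) = ptgt tgt b"
  by (cases a, cases b) (simp add: pcat_def psrc_def ptgt_append)

lemma is_path_pcat:
  "ptgt tgt a = psrc b \<Longrightarrow> is_path src tgt (pcat b a) \<longleftrightarrow> is_path src tgt a \<and> is_path src tgt b"
  by (cases a, cases b) (simp add: pcat_def psrc_def is_path_append)

lemma snd_pcat [simp]: "snd (pcat b a) = snd a @ snd b"
  by (simp add: pcat_def)

lemma plen_pcat: "plen (pcat b a) = plen a + plen b"
  by (simp add: plen_def)

lemma pcat_assoc: "pcat c (pcat b a) = pcat (pcat c b) a"
  by (simp add: pcat_def)

lemma replace_at_pcat_right:
  "i < plen a \<Longrightarrow> replace_at (pcat b a) i \<gamma> = pcat b (replace_at a i \<gamma>)"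
  by (simp add: replace_at_def pcat_def plen_def)

lemma replace_at_pcat_left:
  "j < plen b \<Longrightarrow> replace_at (pcat b a) (plen a + j) \<gamma> = pcat (replace_at b j \<gamma>) a"
  by (simp add: replace_at_def pcat_def plen_def)

lemma replace_at_parallel:
  assumes p: "is_path src tgt p" and i: "i < plen p"
    and \<gamma>: "is_path src tgt \<gamma>" "parallel tgt (arrow_path src (snd p ! i)) \<gamma>"
  shows "is_path src tgt (replace_at p i \<gamma>) \<and> parallel tgt (replace_at p i \<gamma>) p"
proof -
  obtain v as where p_eq: "p = (v, as)" by (cases p)
  let ?x = "as ! i" and ?pre = "take i as" and ?post = "drop (Suc i) as"
  have as: "as = ?pre @ ?x # ?post"
    using i by (simp add: p_eq plen_def id_take_nth_drop)
  have \<gamma>_ends: "fst \<gamma> = src ?x" "ptgt tgt \<gamma> = tgt ?x"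
    using \<gamma>(2) by (auto simp: p_eq parallel_def psrc_def ptgt_def arrow_path_def)
  have "is_path src tgt (v, ?pre @ ?x # ?post)"
    using p as by (simp add: p_eq)
  then have pre: "is_path src tgt (v, ?pre)" "ptgt tgt (v, ?pre) = src ?x"
    and post: "is_path src tgt (tgt ?x, ?post)"
    by (simp_all add: is_path_append)
  have "is_path src tgt (v, ?pre @ snd \<gamma> @ ?post)"
    using pre post \<gamma>(1) \<gamma>_ends by (cases \<gamma>) (simp add: is_path_append ptgt_append)
  moreover have "ptgt tgt (v, ?pre @ snd \<gamma> @ ?post) = ptgt tgt (v, ?pre @ ?x # ?post)"
    using pre \<gamma>_ends by (cases \<gamma>) (simp add: ptgt_append)
  ultimately show ?thesis
    using as by (simp add: p_eq replace_at_def parallel_def psrc_def)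
qed

lemma plen_subpath: "subpath src tgt z d \<Longrightarrow> plen z \<le> plen d"
  by (auto simp: subpath_def pcat_def plen_def)

lemma subpath_refl: "is_path src tgt z \<Longrightarrow> subpath src tgt z z"
  unfolding subpath_def
  by (rule exI[of _ "(ptgt tgt z, [])"], rule exI[of _ "(psrc z, [])"])
     (simp add: pcat_def psrc_def)

lemma subpath_pcat_rightI:
  assumes "subpath src tgt z a" "ptgt tgt a = psrc b" "is_path src tgt b"
  shows "subpath src tgt z (pcat b a)"
proof -
  obtain \<rho> \<sigma> where \<rho>\<sigma>: "is_path src tgt \<rho>" "is_path src tgt \<sigma>" "ptgt tgt \<sigma> = psrc z"
    "ptgt tgt z = psrc \<rho>" "a = pcat \<rho> (pcat z \<sigma>)"
    using assms(1) unfolding subpath_def by blast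
  have "ptgt tgt \<rho> = psrc b"
    using assms(2) \<rho>\<sigma> by (simp add: ptgt_pcat)
  then have "is_path src tgt (pcat b \<rho>)"
    using \<rho>\<sigma>(1) assms(3) by (simp add: is_path_pcat)
  moreover have "pcat b a = pcat (pcat b \<rho>) (pcat z \<sigma>)"
    using \<rho>\<sigma>(5) by (simp add: pcat_assoc)
  ultimately show ?thesis
    using \<rho>\<sigma> unfolding subpath_def by (intro exI[of _ "pcat b \<rho>"] exI[of _ \<sigma>]) simp
qed

lemma subpath_pcat_leftI:
  assumes "subpath src tgt z b" "ptgt tgt a = psrc b" "is_path src tgt a"
  shows "subpath src tgt z (pcat b a)"
proof -
  obtain \<rho> \<sigma> where \<rho>\<sigma>: "is_path src tgt \<rho>" "is_path src tgt \<sigma>" "ptgt tgt \<sigma> = psrc z"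
    "ptgt tgt z = psrc \<rho>" "b = pcat \<rho> (pcat z \<sigma>)"
    using assms(1) unfolding subpath_def by blast
  have "is_path src tgt (pcat \<sigma> a)"
    using assms(2,3) \<rho>\<sigma> by (simp add: is_path_pcat)
  moreover have "ptgt tgt (pcat \<sigma> a) = psrc z"
    using assms(2) \<rho>\<sigma> by (simp add: ptgt_pcat)
  moreover have "pcat b a = pcat \<rho> (pcat z (pcat \<sigma> a))"
    using \<rho>\<sigma>(5) by (simp add: pcat_assoc)
  ultimately show ?thesis
    using \<rho>\<sigma> unfolding subpath_def by blast
qed

section \<open>The monomial algebra\<close>

locale monomial_algebra =
  fixes src tgt :: "'a::finite \<Rightarrow> 'v" and Z :: "('v,'a) path set"
  assumes relation_is_path: "z \<in> Z \<Longrightarrow> is_path src tgt z"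
    and relation_length: "z \<in> Z \<Longrightarrow> 2 \<le> plen z"
    and finite_Bpaths: "finite (Bpaths src tgt Z)"
begin

abbreviation "\<B> \<equiv> Bpaths src tgt Z"
abbreviation "\<Lambda> \<equiv> Lam src tgt Z"
abbreviation "\<Q> \<equiv> Q1B src tgt Z"
abbreviation lmult (infixl "\<cdot>" 70) where "x \<cdot> y \<equiv> lam_mult src tgt Z x y"

lemma Bpaths_is_path: "p \<in> \<B> \<Longrightarrow> is_path src tgt p"
  by (simp add: Bpaths_def)

lemma short_path_in_Bpaths:
  assumes "is_path src tgt p" "plen p < 2"
  shows "p \<in> \<B>"
proof -
  have "\<not> subpath src tgt z p" if "z \<in> Z" for z
    using plen_subpath[of src tgt z p] relation_length[OF that] assms(2) by linarith
  then show ?thesis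
    using assms(1) by (simp add: Bpaths_def)
qed

lemma vertex_in_Bpaths: "(v, []) \<in> \<B>"
  by (simp add: short_path_in_Bpaths plen_def)

lemma arrow_in_Bpaths: "arrow_path src a \<in> \<B>"
  by (simp add: short_path_in_Bpaths plen_def arrow_path_def)

lemma relation_notin_Bpaths: "z \<in> Z \<Longrightarrow> z \<notin> \<B>"
  by (auto simp: Bpaths_def intro: subpath_refl relation_is_path)

lemma Bpaths_pcatD:
  assumes "pcat b a \<in> \<B>" "ptgt tgt a = psrc b"
  shows "a \<in> \<B>" "b \<in> \<B>"
proof -
  have paths: "is_path src tgt a" "is_path src tgt b"
    using assms by (simp_all add: Bpaths_def is_path_pcat)
  show "a \<in> \<B>"
    using assms(1) paths subpath_pcat_rightI[OF _ assms(2) paths(2)] by (auto simp: Bpaths_def)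
  show "b \<in> \<B>"
    using assms(1) paths subpath_pcat_leftI[OF _ assms(2) paths(1)] by (auto simp: Bpaths_def)
qed

lemma finite_pairs_Bpaths: "finite {(\<beta>, \<alpha>). \<beta> \<in> \<B> \<and> \<alpha> \<in> \<B> \<and> P \<beta> \<alpha>}"
  by (rule finite_subset[of _ "\<B> \<times> \<B>"]) (auto simp: finite_Bpaths)

lemma Q1B_iff: "(a, \<gamma>) \<in> \<Q> \<longleftrightarrow> \<gamma> \<in> \<B> \<and> parallel tgt (arrow_path src a) \<gamma>"
  by (simp add: Q1B_def)

lemma finite_Q1B: "finite \<Q>"
  by (rule finite_subset[of _ "UNIV \<times> \<B>"]) (auto simp: Q1B_def finite_Bpaths)

definition path_class :: "('v,'a) path \<Rightarrow> ('v,'a) path \<Rightarrow> 'k::field" where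
  "path_class r = (\<lambda>d. if d = r \<and> r \<in> \<B> then 1 else 0)"

lemma path_class_in_Lam: "path_class r \<in> \<Lambda>"
  by (simp add: Lam_def path_class_def)

lemma path_class_notin_Bpaths: "r \<notin> \<B> \<Longrightarrow> path_class r = (\<lambda>_. 0)"
  by (simp add: path_class_def)

lemma vtx_eq_path_class: "vtx v = path_class (v, [])"
  by (simp add: vtx_def path_class_def vertex_in_Bpaths fun_eq_iff)

lemma Lam_expand: "x \<in> \<Lambda> \<Longrightarrow> x = (\<lambda>p. \<Sum>d\<in>\<B>. x d * path_class d p)"
  by (auto simp: Lam_def path_class_def fun_eq_iff if_distrib finite_Bpaths cong: if_cong)

lemma lam_mult_in_Lam: "x \<cdot> y \<in> \<Lambda>"
  by (simp add: Lam_def lam_mult_def)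

lemma lam_mult_sum_left:
  "(\<lambda>p. \<Sum>i\<in>I. c i * u i p) \<cdot> y = (\<lambda>d. \<Sum>i\<in>I. c i * (u i \<cdot> y) d)"
  by (simp add: lam_mult_def fun_eq_iff case_prod_beta sum_distrib_left sum_distrib_right
      mult.assoc sum.swap[where A = I])

lemma lam_mult_sum_right:
  "x \<cdot> (\<lambda>p. \<Sum>i\<in>I. c i * u i p) = (\<lambda>d. \<Sum>i\<in>I. c i * (x \<cdot> u i) d)"
  by (simp add: lam_mult_def fun_eq_iff case_prod_beta sum_distrib_left sum_distrib_right
      mult.left_commute sum.swap[where A = I])

lemma lam_mult_diff_left: "(\<lambda>p. u p - v p) \<cdot> y = (\<lambda>d. (u \<cdot> y) d - (v \<cdot> y) d)"
  by (simp add: lam_mult_def fun_eq_iff sum_subtractf left_diff_distrib case_prod_beta)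

lemma lam_mult_diff_right: "x \<cdot> (\<lambda>p. u p - v p) = (\<lambda>d. (x \<cdot> u) d - (x \<cdot> v) d)"
  by (simp add: lam_mult_def fun_eq_iff sum_subtractf right_diff_distrib case_prod_beta)

lemma lam_mult_zero_left [simp]: "(\<lambda>_. 0) \<cdot> y = (\<lambda>_. 0)"
  by (simp add: lam_mult_def fun_eq_iff)

lemma lam_mult_zero_right [simp]: "x \<cdot> (\<lambda>_. 0) = (\<lambda>_. 0)"
  by (simp add: lam_mult_def fun_eq_iff)

lemma lam_mult_path_class:
  "path_class b \<cdot> path_class a =
     (\<lambda>d. if b \<in> \<B> \<and> a \<in> \<B> \<and> ptgt tgt a = psrc b \<and> pcat b a = d \<and> d \<in> \<B> then 1 else 0)"
proof
  fix d
  let ?S = "{(\<beta>, \<alpha>). \<beta> \<in> \<B> \<and> \<alpha> \<in> \<B> \<and> ptgt tgt \<alpha> = psrc \<beta> \<and> pcat \<beta> \<alpha> = d}"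
  have "(\<Sum>(\<beta>, \<alpha>)\<in>?S. path_class b \<beta> * path_class a \<alpha>) =
      (\<Sum>x\<in>?S. if x = (b, a) then (if b \<in> \<B> \<and> a \<in> \<B> then 1 else 0) else 0)"
    by (intro sum.cong) (auto simp: path_class_def split: if_splits)
  also have "\<dots> = (if b \<in> \<B> \<and> a \<in> \<B> \<and> ptgt tgt a = psrc b \<and> pcat b a = d then 1 else 0)"
    by (simp add: finite_pairs_Bpaths)
  finally show "(path_class b \<cdot> path_class a) d =
     (if b \<in> \<B> \<and> a \<in> \<B> \<and> ptgt tgt a = psrc b \<and> pcat b a = d \<and> d \<in> \<B> then 1 else 0)"
    by (auto simp: lam_mult_def)
qed

lemma path_class_pcat:
  assumes "is_path src tgt a" "is_path src tgt b" "ptgt tgt a = psrc b"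
  shows "path_class (pcat b a) = path_class b \<cdot> path_class a"
  unfolding lam_mult_path_class using assms Bpaths_pcatD[of b a]
  by (auto simp: path_class_def fun_eq_iff)

lemma lam_mult_eq_zero:
  assumes "\<And>\<beta>. x \<beta> \<noteq> 0 \<Longrightarrow> psrc \<beta> = s" "\<And>\<alpha>. y \<alpha> \<noteq> 0 \<Longrightarrow> ptgt tgt \<alpha> = t" "s \<noteq> t"
  shows "x \<cdot> y = (\<lambda>_. 0)"
proof -
  have "x \<beta> * y \<alpha> = 0" if "ptgt tgt \<alpha> = psrc \<beta>" for \<beta> \<alpha>
    using assms that by fastforce
  then show ?thesis
    by (auto simp: lam_mult_def fun_eq_iff intro!: sum.neutral)
qed

lemma lam_mult_vtx_left: "(vtx t \<cdot> y) d = (if d \<in> \<B> \<and> ptgt tgt d = t then y d else 0)"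
proof -
  let ?S = "{(\<beta>, \<alpha>). \<beta> \<in> \<B> \<and> \<alpha> \<in> \<B> \<and> ptgt tgt \<alpha> = psrc \<beta> \<and> pcat \<beta> \<alpha> = d}"
  have "(\<Sum>(\<beta>, \<alpha>)\<in>?S. vtx t \<beta> * y \<alpha>) = (\<Sum>x\<in>?S. if x = ((t, []), d) then y d else 0)"
    by (intro sum.cong) (auto simp: vtx_def pcat_def split: if_splits)
  also have "\<dots> = (if d \<in> \<B> \<and> ptgt tgt d = t then y d else 0)"
    by (simp add: finite_pairs_Bpaths vertex_in_Bpaths pcat_def psrc_def)
  finally show ?thesis
    by (simp add: lam_mult_def)
qed

lemma lam_mult_vtx_right: "(y \<cdot> vtx s) d = (if d \<in> \<B> \<and> psrc d = s then y d else 0)"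
proof -
  let ?S = "{(\<beta>, \<alpha>). \<beta> \<in> \<B> \<and> \<alpha> \<in> \<B> \<and> ptgt tgt \<alpha> = psrc \<beta> \<and> pcat \<beta> \<alpha> = d}"
  have "(\<Sum>(\<beta>, \<alpha>)\<in>?S. y \<beta> * vtx s \<alpha>) = (\<Sum>x\<in>?S. if x = (d, (s, [])) then y d else 0)"
    by (intro sum.cong) (auto simp: vtx_def pcat_def psrc_def split: if_splits)
  also have "\<dots> = (if d \<in> \<B> \<and> psrc d = s then y d else 0)"
    by (simp add: finite_pairs_Bpaths vertex_in_Bpaths) (auto simp: pcat_def psrc_def prod_eq_iff)
  finally show ?thesis
    by (simp add: lam_mult_def)
qed

section \<open>The derivation defined by arrow data\<close>

lemma repl_eq_sum:
  "repl src tgt Z p x \<gamma> =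
     (\<lambda>d. \<Sum>i<plen p. of_bool (snd p ! i = x) * path_class (replace_at p i \<gamma>) d)"
proof
  fix d
  have "{i. i < plen p \<and> snd p ! i = x \<and> replace_at p i \<gamma> = d \<and> d \<in> \<B>} =
      {..<plen p} \<inter> {i. snd p ! i = x \<and> replace_at p i \<gamma> = d \<and> replace_at p i \<gamma> \<in> \<B>}"
    by auto
  then show "repl src tgt Z p x \<gamma> d =
      (\<Sum>i<plen p. of_bool (snd p ! i = x) * path_class (replace_at p i \<gamma>) d)"
    by (simp add: repl_def plen_def path_class_def of_bool_def[symmetric] eq_commute[of d]
        flip: of_bool_conj)
qed

lemma repl_pcat:
  assumes a: "is_path src tgt a" and b: "is_path src tgt b" and ab: "ptgt tgt a = psrc b"
    and x\<gamma>: "(x, \<gamma>) \<in> \<Q>"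
  shows "repl src tgt Z (pcat b a) x \<gamma> =
    (\<lambda>d. (repl src tgt Z b x \<gamma> \<cdot> path_class a) d + (path_class b \<cdot> repl src tgt Z a x \<gamma>) d)"
proof
  fix d
  have \<gamma>: "is_path src tgt \<gamma>" "parallel tgt (arrow_path src x) \<gamma>"
    using x\<gamma> by (auto simp: Q1B_iff Bpaths_is_path)
  have right: "of_bool (snd a ! i = x) * path_class (pcat b (replace_at a i \<gamma>)) d =
      of_bool (snd a ! i = x) * (path_class b \<cdot> path_class (replace_at a i \<gamma>)) d"
    if "i < plen a" for i
  proof (cases "snd a ! i = x")
    case True
    then have "is_path src tgt (replace_at a i \<gamma>)" "ptgt tgt (replace_at a i \<gamma>) = psrc b"
      using replace_at_parallel[OF a that \<gamma>(1)] \<gamma>(2) ab by (auto simp: parallel_def)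
    then show ?thesis
      using b by (simp add: path_class_pcat)
  qed simp
  have left: "of_bool (snd b ! j = x) * path_class (pcat (replace_at b j \<gamma>) a) d =
      of_bool (snd b ! j = x) * (path_class (replace_at b j \<gamma>) \<cdot> path_class a) d"
    if "j < plen b" for j
  proof (cases "snd b ! j = x")
    case True
    then have "is_path src tgt (replace_at b j \<gamma>)" "ptgt tgt a = psrc (replace_at b j \<gamma>)"
      using replace_at_parallel[OF b that \<gamma>(1)] \<gamma>(2) ab by (auto simp: parallel_def)
    then show ?thesis
      using a by (simp add: path_class_pcat)
  qed simp
  have "repl src tgt Z (pcat b a) x \<gamma> d =
      (\<Sum>i<plen a. of_bool (snd a ! i = x) * path_class (pcat b (replace_at a i \<gamma>)) d) +
      (\<Sum>j<plen b. of_bool (snd b ! j = x) * path_class (pcat (replace_at b j \<gamma>) a) d)"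
    by (simp add: repl_eq_sum plen_pcat sum_lessThan_add nth_append plen_def
        replace_at_pcat_right[unfolded plen_def] replace_at_pcat_left[unfolded plen_def]
        del: sum_of_bool_mult_eq)
  also have "\<dots> =
      (\<Sum>i<plen a. of_bool (snd a ! i = x) * (path_class b \<cdot> path_class (replace_at a i \<gamma>)) d) +
      (\<Sum>j<plen b. of_bool (snd b ! j = x) * (path_class (replace_at b j \<gamma>) \<cdot> path_class a) d)"
    using left right by (intro arg_cong2[where f = "(+)"] sum.cong) simp_all
  also have "\<dots> = (repl src tgt Z b x \<gamma> \<cdot> path_class a) d + (path_class b \<cdot> repl src tgt Z a x \<gamma>) d"
    by (simp only: repl_eq_sum lam_mult_sum_left lam_mult_sum_right add.commute)
  finally show "repl src tgt Z (pcat b a) x \<gamma> d =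
      (repl src tgt Z b x \<gamma> \<cdot> path_class a) d + (path_class b \<cdot> repl src tgt Z a x \<gamma>) d" .
qed

definition path_der :: "('a \<times> ('v,'a) path \<Rightarrow> 'k::field) \<Rightarrow> ('v,'a) path \<Rightarrow> ('v,'a) path \<Rightarrow> 'k" where
  "path_der f p = (\<lambda>d. \<Sum>q\<in>\<Q>. f q * repl src tgt Z p (fst q) (snd q) d)"

lemma psi1_eq_path_der: "z \<in> Z \<Longrightarrow> psi1 src tgt Z f (z, d) = path_der f z d"
  by (simp add: psi1_def path_der_def case_prod_beta)

lemma path_der_pcat:
  assumes "is_path src tgt a" "is_path src tgt b" "ptgt tgt a = psrc b"
  shows "path_der f (pcat b a) =
    (\<lambda>d. (path_der f b \<cdot> path_class a) d + (path_class b \<cdot> path_der f a) d)"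
proof
  fix d
  have "path_der f (pcat b a) d =
      (\<Sum>q\<in>\<Q>. f q * (repl src tgt Z b (fst q) (snd q) \<cdot> path_class a) d) +
      (\<Sum>q\<in>\<Q>. f q * (path_class b \<cdot> repl src tgt Z a (fst q) (snd q)) d)"
    unfolding path_der_def sum.distrib[symmetric] distrib_left[symmetric]
    by (intro sum.cong refl) (simp add: repl_pcat[OF assms])
  then show "path_der f (pcat b a) d =
      (path_der f b \<cdot> path_class a) d + (path_class b \<cdot> path_der f a) d"
    by (simp only: path_der_def lam_mult_sum_left lam_mult_sum_right)
qed

lemma path_der_vertex: "path_der f (v, []) = (\<lambda>_. 0)"
  by (simp add: path_der_def repl_def)

lemma path_der_arrow: "path_der f (arrow_path src c) = (\<lambda>d. if (c, d) \<in> \<Q> then f (c, d) else 0)"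
proof
  fix d
  have repl_arrow: "repl src tgt Z (arrow_path src c) (fst q) (snd q) d = of_bool (q = (c, d))"
    if "q \<in> \<Q>" for q
    using that by (auto simp: repl_eq_sum arrow_path_def replace_at_def path_class_def plen_def
        Q1B_def parallel_def psrc_def prod_eq_iff)
  have "path_der f (arrow_path src c) d = (\<Sum>q\<in>\<Q>. if q = (c, d) then f q else 0)"
    unfolding path_der_def by (intro sum.cong refl) (simp add: repl_arrow)
  then show "path_der f (arrow_path src c) d = (if (c, d) \<in> \<Q> then f (c, d) else 0)"
    by (simp add: finite_Q1B)
qed

lemma path_der_support:
  fixes f :: "'a \<times> ('v,'a) path \<Rightarrow> 'k::field"
  assumes "is_path src tgt p" "path_der f p d \<noteq> 0"
  shows "d \<in> \<B> \<and> parallel tgt d p"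
proof -
  obtain q where q: "q \<in> \<Q>" "repl src tgt Z p (fst q) (snd q) d \<noteq> (0::'k)"
    using assms(2) unfolding path_der_def by (auto elim: sum.not_neutral_contains_not_neutral)
  then obtain i where i: "i < plen p" "snd p ! i = fst q"
    "path_class (replace_at p i (snd q)) d \<noteq> (0::'k)"
    unfolding repl_eq_sum by (auto elim: sum.not_neutral_contains_not_neutral)
  have "is_path src tgt (snd q)" "parallel tgt (arrow_path src (snd p ! i)) (snd q)"
    using q(1) i(2) by (auto simp: Q1B_def Bpaths_is_path)
  then show ?thesis
    using replace_at_parallel[OF assms(1) i(1)] i(3) by (auto simp: path_class_def split: if_splits)
qed

lemma path_der_eq_0_if_notin_Bpaths:
  fixes f :: "'a \<times> ('v,'a) path \<Rightarrow> 'k::field"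
  assumes f: "f \<in> Ker_psi1 src tgt Z" and p: "is_path src tgt p" "p \<notin> \<B>"
  shows "path_der f p = (\<lambda>_. 0)"
proof -
  obtain z \<rho> \<sigma> where z: "z \<in> Z" and \<rho>\<sigma>: "is_path src tgt \<rho>" "is_path src tgt \<sigma>"
    "ptgt tgt \<sigma> = psrc z" "ptgt tgt z = psrc \<rho>" and p_eq: "p = pcat \<rho> (pcat z \<sigma>)"
    using p unfolding Bpaths_def subpath_def by blast
  have z_path: "is_path src tgt z"
    using z by (rule relation_is_path)
  have z\<sigma>: "is_path src tgt (pcat z \<sigma>)" "ptgt tgt (pcat z \<sigma>) = psrc \<rho>"
    using z_path \<rho>\<sigma> by (simp_all add: is_path_pcat ptgt_pcat)
  have "path_der f z = (\<lambda>_. 0)"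
  proof
    fix d
    show "path_der f z d = 0"
      using f by (simp add: Ker_psi1_def flip: psi1_eq_path_der[OF z])
  qed
  moreover have "path_class z = (\<lambda>_. 0::'k)" "path_class (pcat z \<sigma>) = (\<lambda>_. 0::'k)"
    using relation_notin_Bpaths[OF z] Bpaths_pcatD(2)[OF _ \<rho>\<sigma>(3)]
    by (auto intro!: path_class_notin_Bpaths)
  ultimately show ?thesis
    using z_path z\<sigma> \<rho>\<sigma> by (simp add: p_eq path_der_pcat)
qed

definition der_ext ::
    "('a \<times> ('v,'a) path \<Rightarrow> 'k::field) \<Rightarrow> (('v,'a) path \<Rightarrow> 'k) \<Rightarrow> ('v,'a) path \<Rightarrow> 'k" where
  "der_ext f x = (\<lambda>p. \<Sum>d\<in>\<B>. x d * path_der f d p)"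

definition der_of ::
    "('a \<times> ('v,'a) path \<Rightarrow> 'k::field) \<Rightarrow> (('v,'a) path \<Rightarrow> 'k) \<Rightarrow> ('v,'a) path \<Rightarrow> 'k" where
  "der_of f x = (if x \<in> \<Lambda> then der_ext f x else (\<lambda>_. 0))"

lemma der_ext_in_Lam: "der_ext f x \<in> \<Lambda>"
  by (simp add: Lam_def der_ext_def path_der_def repl_def)

lemma der_ext_sum: "der_ext f (\<lambda>p. \<Sum>i\<in>I. c i * u i p) = (\<lambda>p. \<Sum>i\<in>I. c i * der_ext f (u i) p)"
  by (simp add: der_ext_def fun_eq_iff sum_distrib_left sum_distrib_right mult.assoc
      sum.swap[where A = I])

lemma der_ext_add: "der_ext f (\<lambda>p. x p + y p) = (\<lambda>p. der_ext f x p + der_ext f y p)"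
  by (simp add: der_ext_def fun_eq_iff distrib_right sum.distrib)

lemma der_ext_smult: "der_ext f (\<lambda>p. c * x p) = (\<lambda>p. c * der_ext f x p)"
  by (simp add: der_ext_def fun_eq_iff sum_distrib_left mult.assoc)

lemma der_ext_zero [simp]: "der_ext f (\<lambda>_. 0) = (\<lambda>_. 0)"
  by (simp add: der_ext_def fun_eq_iff)

lemma der_ext_path_class: "der_ext f (path_class r) = (if r \<in> \<B> then path_der f r else (\<lambda>_. 0))"
proof
  fix p
  have "der_ext f (path_class r) p =
      (\<Sum>d\<in>\<B>. if d = r then (if r \<in> \<B> then path_der f r p else 0) else 0)"
    unfolding der_ext_def by (intro sum.cong) (auto simp: path_class_def)
  then show "der_ext f (path_class r) p = (if r \<in> \<B> then path_der f r else (\<lambda>_. 0)) p"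
    by (simp add: finite_Bpaths)
qed

lemma der_ext_path_class_Ker:
  "f \<in> Ker_psi1 src tgt Z \<Longrightarrow> is_path src tgt r \<Longrightarrow> der_ext f (path_class r) = path_der f r"
  by (simp add: der_ext_path_class path_der_eq_0_if_notin_Bpaths)

lemma der_ext_mult_path_class:
  fixes f :: "'a \<times> ('v,'a) path \<Rightarrow> 'k::field"
  assumes f: "f \<in> Ker_psi1 src tgt Z" and a: "a \<in> \<B>" and b: "b \<in> \<B>"
  shows "der_ext f (path_class b \<cdot> path_class a) =
    (\<lambda>p. (path_der f b \<cdot> path_class a) p + (path_class b \<cdot> path_der f a) p)"
proof (cases "ptgt tgt a = psrc b")
  case True
  with a b show ?thesis
    by (simp add: Bpaths_is_path is_path_pcat der_ext_path_class_Ker[OF f] path_der_pcat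
        flip: path_class_pcat)
next
  case False
  have "path_der f b \<cdot> path_class a = (\<lambda>_. 0)"
    using path_der_support[OF Bpaths_is_path[OF b]] False
    by (intro lam_mult_eq_zero[where s = "psrc b" and t = "ptgt tgt a"])
       (auto simp: parallel_def path_class_def split: if_splits)
  moreover have "path_class b \<cdot> path_der f a = (\<lambda>_. 0)"
    using path_der_support[OF Bpaths_is_path[OF a]] False
    by (intro lam_mult_eq_zero[where s = "psrc b" and t = "ptgt tgt a"])
       (auto simp: parallel_def path_class_def split: if_splits)
  moreover have "path_class b \<cdot> path_class a = (\<lambda>_. 0::'k)"
    using False by (simp add: lam_mult_path_class fun_eq_iff)
  ultimately show ?thesis
    by simp
qed

lemma lam_mult_sum_sum:
  "(\<lambda>p. \<Sum>i\<in>I. c i * u i p) \<cdot> (\<lambda>p. \<Sum>j\<in>J. e j * v j p) =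
     (\<lambda>d. \<Sum>i\<in>I. c i * (\<Sum>j\<in>J. e j * (u i \<cdot> v j) d))"
  by (simp add: lam_mult_sum_left lam_mult_sum_right)

lemma der_ext_mult:
  assumes f: "f \<in> Ker_psi1 src tgt Z" and x: "x \<in> \<Lambda>" and y: "y \<in> \<Lambda>"
  shows "der_ext f (x \<cdot> y) = (\<lambda>p. (der_ext f x \<cdot> y) p + (x \<cdot> der_ext f y) p)"
proof
  fix p
  let ?x = "\<lambda>p. \<Sum>b\<in>\<B>. x b * path_class b p" and ?y = "\<lambda>p. \<Sum>a\<in>\<B>. y a * path_class a p"
  have x_eq: "x = ?x" and y_eq: "y = ?y"
    using x y by (simp_all flip: Lam_expand)
  have "der_ext f (x \<cdot> y) p =
      der_ext f (\<lambda>d. \<Sum>b\<in>\<B>. x b * (\<Sum>a\<in>\<B>. y a * (path_class b \<cdot> path_class a) d)) p"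
    by (subst x_eq, subst y_eq) (simp only: lam_mult_sum_sum)
  also have "\<dots> = (\<Sum>b\<in>\<B>. x b * (\<Sum>a\<in>\<B>. y a * der_ext f (path_class b \<cdot> path_class a) p))"
    by (simp add: der_ext_sum)
  also have "\<dots> = (\<Sum>b\<in>\<B>. x b * (\<Sum>a\<in>\<B>. y a * (path_der f b \<cdot> path_class a) p)) +
      (\<Sum>b\<in>\<B>. x b * (\<Sum>a\<in>\<B>. y a * (path_class b \<cdot> path_der f a) p))"
    by (simp add: der_ext_mult_path_class[OF f] distrib_left sum.distrib)
  also have "(\<Sum>b\<in>\<B>. x b * (\<Sum>a\<in>\<B>. y a * (path_der f b \<cdot> path_class a) p)) = (der_ext f x \<cdot> y) p"
  proof -
    have "der_ext f x \<cdot> y = der_ext f x \<cdot> ?y"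
      using y_eq by (rule arg_cong)
    then show ?thesis
      by (simp only: der_ext_def lam_mult_sum_sum)
  qed
  also have "(\<Sum>b\<in>\<B>. x b * (\<Sum>a\<in>\<B>. y a * (path_class b \<cdot> path_der f a) p)) = (x \<cdot> der_ext f y) p"
  proof -
    have "x \<cdot> der_ext f y = ?x \<cdot> der_ext f y"
      using x_eq by (rule arg_cong)
    then show ?thesis
      by (simp only: der_ext_def lam_mult_sum_sum)
  qed
  finally show "der_ext f (x \<cdot> y) p = (der_ext f x \<cdot> y) p + (x \<cdot> der_ext f y) p" .
qed

lemma Lam_zero: "(\<lambda>_. 0) \<in> \<Lambda>"
  and Lam_add: "x \<in> \<Lambda> \<Longrightarrow> y \<in> \<Lambda> \<Longrightarrow> (\<lambda>p. x p + y p) \<in> \<Lambda>"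
  and Lam_diff: "x \<in> \<Lambda> \<Longrightarrow> y \<in> \<Lambda> \<Longrightarrow> (\<lambda>p. x p - y p) \<in> \<Lambda>"
  and Lam_smult: "x \<in> \<Lambda> \<Longrightarrow> (\<lambda>p. c * x p) \<in> \<Lambda>"
  by (simp_all add: Lam_def)

lemma vtx_in_Lam: "vtx v \<in> \<Lambda>"
  by (simp add: vtx_eq_path_class path_class_in_Lam)

lemma der_of_in_Der_E:
  fixes f :: "'a \<times> ('v,'a) path \<Rightarrow> 'k::field"
  assumes f: "f \<in> Ker_psi1 src tgt Z"
  shows "der_of f \<in> Der_E src tgt Z"
proof -
  have mult: "der_of f (x \<cdot> y) = (\<lambda>p. (der_of f x \<cdot> y) p + (x \<cdot> der_of f y) p)"
    if "x \<in> \<Lambda>" "y \<in> \<Lambda>" for x y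
    using der_ext_mult[OF f that] that by (simp add: der_of_def lam_mult_in_Lam)
  have vtx: "der_of f (vtx v) = (\<lambda>_. 0)" for v
    by (simp add: der_of_def vtx_in_Lam vtx_eq_path_class der_ext_path_class path_der_vertex)
  show ?thesis
    unfolding Der_E_def
  proof (intro CollectI conjI ballI allI impI)
    show "der_of f x \<in> \<Lambda>" for x
      by (simp add: der_of_def der_ext_in_Lam Lam_zero)
    show "der_of f x = (\<lambda>_. 0)" if "x \<notin> \<Lambda>" for x
      using that by (simp add: der_of_def)
    show "der_of f (\<lambda>p. x p + y p) = (\<lambda>p. der_of f x p + der_of f y p)"
      if "x \<in> \<Lambda>" "y \<in> \<Lambda>" for x y
      using that by (simp add: der_of_def Lam_add der_ext_add)
    show "der_of f (\<lambda>p. c * x p) = (\<lambda>p. c * der_of f x p)" if "x \<in> \<Lambda>" for x c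
      using that by (simp add: der_of_def Lam_smult der_ext_smult)
    show "der_of f (x \<cdot> y) = (\<lambda>p. (der_of f x \<cdot> y) p + (x \<cdot> der_of f y) p)"
      if "x \<in> \<Lambda>" "y \<in> \<Lambda>" for x y
      using that by (rule mult)
    show "der_of f (vtx v \<cdot> x) = vtx v \<cdot> der_of f x" if "x \<in> \<Lambda>" for x v
      using mult[OF vtx_in_Lam that] by (simp add: vtx)
    show "der_of f (x \<cdot> vtx v) = der_of f x \<cdot> vtx v" if "x \<in> \<Lambda>" for x v
      using mult[OF that vtx_in_Lam] by (simp add: vtx)
  qed
qed

lemma der_of_add: "der_of (\<lambda>q. f q + g q) = (\<lambda>x p. der_of f x p + der_of g x p)"
  by (simp add: der_of_def der_ext_def path_der_def fun_eq_iff distrib_left distrib_right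
      sum.distrib)

lemma der_of_smult: "der_of (\<lambda>q. c * f q) = (\<lambda>x p. c * der_of f x p)"
  by (simp add: der_of_def der_ext_def path_der_def fun_eq_iff sum_distrib_left mult.assoc
      mult.left_commute)

lemma der_of_path_class: "r \<in> \<B> \<Longrightarrow> der_of f (path_class r) = path_der f r"
  by (simp add: der_of_def path_class_in_Lam der_ext_path_class)

section \<open>Derivations are determined by their values on arrows\<close>

lemma
  assumes "D \<in> Der_E src tgt Z"
  shows Der_E_closed: "x \<in> \<Lambda> \<Longrightarrow> D x \<in> \<Lambda>"
    and Der_E_outside: "x \<notin> \<Lambda> \<Longrightarrow> D x = (\<lambda>_. 0)"
    and Der_E_add: "x \<in> \<Lambda> \<Longrightarrow> y \<in> \<Lambda> \<Longrightarrow> D (\<lambda>p. x p + y p) = (\<lambda>p. D x p + D y p)"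
    and Der_E_smult: "x \<in> \<Lambda> \<Longrightarrow> D (\<lambda>p. c * x p) = (\<lambda>p. c * D x p)"
    and Der_E_mult: "x \<in> \<Lambda> \<Longrightarrow> y \<in> \<Lambda> \<Longrightarrow> D (x \<cdot> y) = (\<lambda>p. (D x \<cdot> y) p + (x \<cdot> D y) p)"
    and Der_E_vtx_left: "x \<in> \<Lambda> \<Longrightarrow> D (vtx v \<cdot> x) = vtx v \<cdot> D x"
    and Der_E_vtx_right: "x \<in> \<Lambda> \<Longrightarrow> D (x \<cdot> vtx v) = D x \<cdot> vtx v"
  using assms unfolding Der_E_def by blast+

lemma Der_E_zero: "D \<in> Der_E src tgt Z \<Longrightarrow> D (\<lambda>_. 0) = (\<lambda>_. 0)"
  using Der_E_smult[OF _ Lam_zero, of D 0] by simp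

lemma Lam_sum: "(\<And>i. i \<in> I \<Longrightarrow> u i \<in> \<Lambda>) \<Longrightarrow> (\<lambda>p. \<Sum>i\<in>I. c i * u i p) \<in> \<Lambda>"
  by (auto simp: Lam_def intro!: sum.neutral)

lemma Der_E_sum:
  assumes D: "D \<in> Der_E src tgt Z" and I: "finite I" and u: "\<And>i. i \<in> I \<Longrightarrow> u i \<in> \<Lambda>"
  shows "D (\<lambda>p. \<Sum>i\<in>I. c i * u i p) = (\<lambda>p. \<Sum>i\<in>I. c i * D (u i) p)"
  using I u
proof (induction I rule: finite_induct)
  case empty
  then show ?case
    using Der_E_zero[OF D] by simp
next
  case (insert i I)
  have "D (\<lambda>p. \<Sum>i\<in>insert i I. c i * u i p) = D (\<lambda>p. c i * u i p + (\<Sum>i\<in>I. c i * u i p))"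
    using insert.hyps by simp
  also have "\<dots> = (\<lambda>p. c i * D (u i) p + D (\<lambda>p. \<Sum>i\<in>I. c i * u i p) p)"
    using insert.prems by (simp add: Der_E_add[OF D] Der_E_smult[OF D] Lam_smult Lam_sum)
  finally show ?case
    using insert by simp
qed

lemma path_class_mult_vtx:
  assumes "r \<in> \<B>"
  shows "vtx (ptgt tgt r) \<cdot> path_class r = path_class r"
    and "path_class r \<cdot> vtx (psrc r) = path_class r"
  unfolding vtx_eq_path_class lam_mult_path_class using assms
  by (auto simp: vertex_in_Bpaths fun_eq_iff path_class_def pcat_def psrc_def)

lemma vtx_mult_vtx: "vtx v \<cdot> vtx v = vtx v"
  using path_class_mult_vtx(1)[OF vertex_in_Bpaths, of v] by (simp add: vtx_eq_path_class)

lemma Der_E_vtx: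
  fixes D :: "(('v,'a) path \<Rightarrow> 'k::field) \<Rightarrow> (('v,'a) path \<Rightarrow> 'k)"
  assumes D: "D \<in> Der_E src tgt Z"
  shows "D (vtx v) = (\<lambda>_. 0)"
proof
  fix p
  let ?e = "vtx v :: ('v,'a) path \<Rightarrow> 'k"
  have "D ?e p = (D ?e \<cdot> ?e) p + (?e \<cdot> D ?e) p"
    using fun_cong[OF Der_E_mult[OF D vtx_in_Lam[of v] vtx_in_Lam[of v]], of p]
    by (simp only: vtx_mult_vtx)
  moreover have "(?e \<cdot> D ?e) p = D ?e p"
    using fun_cong[OF Der_E_vtx_left[OF D vtx_in_Lam[of v], of v], of p]
    by (simp only: vtx_mult_vtx)
  moreover have "(D ?e \<cdot> ?e) p = D ?e p"
    using fun_cong[OF Der_E_vtx_right[OF D vtx_in_Lam[of v], of v], of p]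
    by (simp only: vtx_mult_vtx)
  ultimately show "D ?e p = 0"
    by (metis add_cancel_right_right)
qed

lemma Der_E_arrow_support:
  assumes D: "D \<in> Der_E src tgt Z" and nz: "D (path_class (arrow_path src c)) d \<noteq> 0"
  shows "(c, d) \<in> \<Q>"
proof -
  let ?a = "path_class (arrow_path src c)"
  have a_Lam: "?a \<in> \<Lambda>"
    by (rule path_class_in_Lam)
  have left: "vtx (tgt c) \<cdot> ?a = ?a" and right: "?a \<cdot> vtx (src c) = ?a"
    using path_class_mult_vtx[OF arrow_in_Bpaths, of c]
    by (simp_all add: arrow_path_def psrc_def ptgt_def)
  have "D ?a d = (vtx (tgt c) \<cdot> D ?a) d"
    using fun_cong[OF Der_E_vtx_left[OF D a_Lam, of "tgt c"], of d]
    unfolding left .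
  moreover have "D ?a d = (D ?a \<cdot> vtx (src c)) d"
    using fun_cong[OF Der_E_vtx_right[OF D a_Lam, of "src c"], of d]
    unfolding right .
  ultimately have "(vtx (tgt c) \<cdot> D ?a) d \<noteq> 0" "(D ?a \<cdot> vtx (src c)) d \<noteq> 0"
    using nz by simp_all
  then have "d \<in> \<B>" "ptgt tgt d = tgt c" "psrc d = src c"
    by (simp_all add: lam_mult_vtx_left lam_mult_vtx_right split: if_splits)
  then show ?thesis
    by (simp add: Q1B_iff parallel_def arrow_path_def psrc_def ptgt_def)
qed

definition arrow_coeffs ::
    "((('v,'a) path \<Rightarrow> 'k::field) \<Rightarrow> (('v,'a) path \<Rightarrow> 'k)) \<Rightarrow> 'a \<times> ('v,'a) path \<Rightarrow> 'k" where
  "arrow_coeffs D q = (if q \<in> \<Q> then D (path_class (arrow_path src (fst q))) (snd q) else 0)"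

lemma arrow_coeffs_in_kQ1B: "arrow_coeffs D \<in> kQ1B src tgt Z"
  by (simp add: kQ1B_def arrow_coeffs_def)

lemma Der_E_path_class_arrow:
  "D \<in> Der_E src tgt Z \<Longrightarrow>
    D (path_class (arrow_path src c)) = path_der (arrow_coeffs D) (arrow_path src c)"
  using Der_E_arrow_support[of D c] by (auto simp: path_der_arrow arrow_coeffs_def fun_eq_iff)

lemma Der_E_path_class:
  assumes D: "D \<in> Der_E src tgt Z"
  shows "is_path src tgt p \<Longrightarrow> D (path_class p) = path_der (arrow_coeffs D) p"
proof (induction "snd p" arbitrary: p rule: rev_induct)
  case Nil
  then have "p = (fst p, [])"
    by (metis prod.collapse)
  then show ?case
    using Der_E_vtx[OF D] by (metis path_der_vertex vtx_eq_path_class)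
next
  case (snoc c as)
  obtain v where p: "p = (v, as @ [c])"
    using snoc.hyps(2) by (metis prod.collapse)
  let ?c = "arrow_path src c"
  have "is_path src tgt (v, as)" "ptgt tgt (v, as) = psrc ?c" "is_path src tgt ?c"
    using snoc.prems by (simp_all add: p is_path_append arrow_path_def psrc_def)
  moreover have "p = pcat ?c (v, as)"
    by (simp add: p pcat_def arrow_path_def)
  ultimately show ?case
    using snoc.hyps(1)[of "(v, as)"]
    by (simp add: path_class_pcat path_der_pcat Der_E_mult[OF D] path_class_in_Lam
        Der_E_path_class_arrow[OF D])
qed

lemma arrow_coeffs_in_Ker:
  assumes D: "D \<in> Der_E src tgt Z"
  shows "arrow_coeffs D \<in> Ker_psi1 src tgt Z"
proof -
  have "psi1 src tgt Z (arrow_coeffs D) (z, d) = 0" for z d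
  proof (cases "z \<in> Z")
    case True
    then have "path_der (arrow_coeffs D) z = D (\<lambda>_. 0)"
      using Der_E_path_class[OF D relation_is_path] relation_notin_Bpaths
      by (simp add: path_class_notin_Bpaths)
    then show ?thesis
      using True by (simp add: psi1_eq_path_der Der_E_zero[OF D])
  qed (simp add: psi1_def)
  then show ?thesis
    by (auto simp: Ker_psi1_def arrow_coeffs_in_kQ1B)
qed

lemma der_of_arrow_coeffs:
  assumes D: "D \<in> Der_E src tgt Z"
  shows "der_of (arrow_coeffs D) = D"
proof
  fix x
  show "der_of (arrow_coeffs D) x = D x"
  proof (cases "x \<in> \<Lambda>")
    case True
    have "der_of (arrow_coeffs D) x = (\<lambda>p. \<Sum>d\<in>\<B>. x d * D (path_class d) p)"
      using True by (simp add: der_of_def der_ext_def Der_E_path_class[OF D] Bpaths_is_path)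
    also have "\<dots> = D (\<lambda>p. \<Sum>d\<in>\<B>. x d * path_class d p)"
      by (simp add: Der_E_sum[OF D finite_Bpaths] path_class_in_Lam)
    also have "\<dots> = D x"
      using True by (simp flip: Lam_expand)
    finally show ?thesis .
  qed (simp add: der_of_def Der_E_outside[OF D])
qed

lemma arrow_coeffs_der_of: "f \<in> kQ1B src tgt Z \<Longrightarrow> arrow_coeffs (der_of f) = f"
  by (auto simp: arrow_coeffs_def der_of_path_class arrow_in_Bpaths path_der_arrow kQ1B_def
      fun_eq_iff)

section \<open>The bracket\<close>

lemma commutator_in_Der_E:
  assumes D1: "D1 \<in> Der_E src tgt Z" and D2: "D2 \<in> Der_E src tgt Z"
  shows "commutator D1 D2 \<in> Der_E src tgt Z"
  unfolding Der_E_def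
proof (intro CollectI conjI ballI allI impI)
  note closed = Der_E_closed[OF D1] Der_E_closed[OF D2] lam_mult_in_Lam
  show "commutator D1 D2 x \<in> \<Lambda>" if "x \<in> \<Lambda>" for x
    using that by (simp add: commutator_def Lam_diff closed)
  show "commutator D1 D2 x = (\<lambda>_. 0)" if "x \<notin> \<Lambda>" for x
    using that by (simp add: commutator_def Der_E_outside[OF D1] Der_E_outside[OF D2]
        Der_E_zero[OF D1] Der_E_zero[OF D2])
  show "commutator D1 D2 (\<lambda>p. x p + y p) = (\<lambda>p. commutator D1 D2 x p + commutator D1 D2 y p)"
    if "x \<in> \<Lambda>" "y \<in> \<Lambda>" for x y
    using that by (simp add: commutator_def Der_E_add[OF D1] Der_E_add[OF D2] closed algebra_simps)
  show "commutator D1 D2 (\<lambda>p. c * x p) = (\<lambda>p. c * commutator D1 D2 x p)" if "x \<in> \<Lambda>" for x c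
    using that by (simp add: commutator_def Der_E_smult[OF D1] Der_E_smult[OF D2] closed
        right_diff_distrib)
  show "commutator D1 D2 (x \<cdot> y) =
      (\<lambda>p. (commutator D1 D2 x \<cdot> y) p + (x \<cdot> commutator D1 D2 y) p)"
    if "x \<in> \<Lambda>" "y \<in> \<Lambda>" for x y
    using that
    by (simp add: commutator_def Der_E_mult[OF D1] Der_E_mult[OF D2] Der_E_add[OF D1]
        Der_E_add[OF D2] closed lam_mult_diff_left lam_mult_diff_right fun_eq_iff algebra_simps)
  show "commutator D1 D2 (vtx v \<cdot> x) = vtx v \<cdot> commutator D1 D2 x" if "x \<in> \<Lambda>" for x v
    using that by (simp add: commutator_def Der_E_vtx_left[OF D1] Der_E_vtx_left[OF D2] closed
        lam_mult_diff_right)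
  show "commutator D1 D2 (x \<cdot> vtx v) = commutator D1 D2 x \<cdot> vtx v" if "x \<in> \<Lambda>" for x v
    using that by (simp add: commutator_def Der_E_vtx_right[OF D1] Der_E_vtx_right[OF D2] closed
        lam_mult_diff_left)
qed

lemma sum_Q1B_fst:
  "(\<Sum>q\<in>\<Q>. if fst q = c then h (snd q) else 0) = (\<Sum>e\<in>\<B>. if (c, e) \<in> \<Q> then h e else 0)"
proof -
  have "{q \<in> \<Q>. fst q = c} = Pair c ` {e \<in> \<B>. (c, e) \<in> \<Q>}"
    by (auto simp: Q1B_iff)
  then have "(\<Sum>q\<in>{q \<in> \<Q>. fst q = c}. h (snd q)) = (\<Sum>e\<in>{e \<in> \<B>. (c, e) \<in> \<Q>}. h e)"
    by (simp add: sum.reindex inj_on_def)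
  then show ?thesis
    by (simp add: sum.inter_filter finite_Q1B finite_Bpaths)
qed

lemma der_ext_path_der_arrow:
  "der_ext g (path_der f (arrow_path src c)) d =
     (\<Sum>q\<in>\<Q>. if fst q = c then f (c, snd q) * path_der g (snd q) d else 0)"
proof -
  have "der_ext g (path_der f (arrow_path src c)) d =
      (\<Sum>e\<in>\<B>. if (c, e) \<in> \<Q> then f (c, e) * path_der g e d else 0)"
    unfolding der_ext_def path_der_arrow by (intro sum.cong) auto
  then show ?thesis
    using sum_Q1B_fst[of c "\<lambda>e. f (c, e) * path_der g e d"] by simp
qed

lemma bracket_eq:
  "bracket src tgt Z f g (c, d) =
     (\<Sum>q\<in>\<Q>. if fst q = c then g (c, snd q) * path_der f (snd q) d else 0) -
     (\<Sum>q\<in>\<Q>. if fst q = c then f (c, snd q) * path_der g (snd q) d else 0)"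
proof -
  have "bracket src tgt Z f g (c, d) =
     (\<Sum>q\<in>\<Q>. \<Sum>q'\<in>\<Q>.
        f q * g q' * (if c = fst q' then repl src tgt Z (snd q') (fst q) (snd q) d else 0)) -
     (\<Sum>q\<in>\<Q>. \<Sum>q'\<in>\<Q>.
        f q * g q' * (if c = fst q then repl src tgt Z (snd q) (fst q') (snd q') d else 0))"
    (is "_ = ?S1 - ?S2")
    by (simp add: bracket_def case_prod_beta right_diff_distrib sum_subtractf)
  also have "?S1 = (\<Sum>q'\<in>\<Q>. if fst q' = c then g (c, snd q') * path_der f (snd q') d else 0)"
    by (subst sum.swap) (auto simp: path_der_def sum_distrib_left mult_ac intro!: sum.cong)
  also have "?S2 = (\<Sum>q\<in>\<Q>. if fst q = c then f (c, snd q) * path_der g (snd q) d else 0)"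
    by (auto simp: path_der_def sum_distrib_left mult_ac intro!: sum.cong)
  finally show ?thesis .
qed

lemma path_der_in_Lam: "path_der f p \<in> \<Lambda>"
  by (simp add: Lam_def path_der_def repl_def)

lemma der_of_path_der: "der_of f (path_der g p) = der_ext f (path_der g p)"
  by (simp add: der_of_def path_der_in_Lam)

lemma commutator_der_of_arrow:
  "commutator (der_of f) (der_of g) (path_class (arrow_path src c)) d =
     bracket src tgt Z f g (c, d)"
  by (simp add: commutator_def der_of_path_class arrow_in_Bpaths der_of_path_der
      der_ext_path_der_arrow bracket_eq)

lemma der_of_bracket:
  assumes f: "f \<in> Ker_psi1 src tgt Z" and g: "g \<in> Ker_psi1 src tgt Z"
  shows "der_of (bracket src tgt Z f g) = commutator (der_of f) (der_of g)"
proof -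
  let ?C = "commutator (der_of f) (der_of g)"
  have C: "?C \<in> Der_E src tgt Z"
    using commutator_in_Der_E der_of_in_Der_E f g by blast
  have "arrow_coeffs ?C = bracket src tgt Z f g"
  proof
    fix q
    show "arrow_coeffs ?C q = bracket src tgt Z f g q"
      using Der_E_arrow_support[OF C, of "fst q" "snd q"]
        commutator_der_of_arrow[of f g "fst q" "snd q"]
      by (auto simp: arrow_coeffs_def)
  qed
  then show ?thesis
    using der_of_arrow_coeffs[OF C] by simp
qed

end

lemma Ker_psi1_subset: "Ker_psi1 src tgt Z \<subseteq> kQ1B src tgt Z"
  by (auto simp: Ker_psi1_def)

theorem proposition1p8:
  fixes src tgt :: "'a::finite \<Rightarrow> 'v::finite"
    and Z :: "('v,'a) path set"
  assumes "minimal_relations src tgt Z"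
    and "finite (Bpaths src tgt Z)"
  shows "\<exists>\<phi> :: ('a \<times> ('v,'a) path \<Rightarrow> 'k::alg_closed_field) \<Rightarrow>
                 ((('v,'a) path \<Rightarrow> 'k) \<Rightarrow> (('v,'a) path \<Rightarrow> 'k)).
           bij_betw \<phi> (Ker_psi1 src tgt Z) (Der_E src tgt Z) \<and>
           (\<forall>f\<in>Ker_psi1 src tgt Z. \<forall>g\<in>Ker_psi1 src tgt Z.
              \<phi> (\<lambda>q. f q + g q) = (\<lambda>x p. \<phi> f x p + \<phi> g x p)) \<and>
           (\<forall>c. \<forall>f\<in>Ker_psi1 src tgt Z. \<phi> (\<lambda>q. c * f q) = (\<lambda>x p. c * \<phi> f x p)) \<and>
           (\<forall>f\<in>Ker_psi1 src tgt Z. \<forall>g\<in>Ker_psi1 src tgt Z.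
              \<phi> (bracket src tgt Z f g) = commutator (\<phi> f) (\<phi> g))"
proof -
  interpret monomial_algebra src tgt Z
    using assms by unfold_locales (auto simp: minimal_relations_def)
  have "bij_betw der_of (Ker_psi1 src tgt Z) (Der_E src tgt Z)"
  proof (rule bij_betw_byWitness[where f' = arrow_coeffs])
    show "\<forall>f\<in>Ker_psi1 src tgt Z. arrow_coeffs (der_of f) = f"
      using Ker_psi1_subset arrow_coeffs_der_of by blast
    show "\<forall>D\<in>Der_E src tgt Z. der_of (arrow_coeffs D) = D"
      using der_of_arrow_coeffs by blast
    show "der_of ` Ker_psi1 src tgt Z \<subseteq> Der_E src tgt Z"
      using der_of_in_Der_E by blast
    show "arrow_coeffs ` Der_E src tgt Z \<subseteq> Ker_psi1 src tgt Z"
      using arrow_coeffs_in_Ker by blast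
  qed
  then show ?thesis
    by (intro exI[of _ der_of]) (simp add: der_of_add der_of_smult der_of_bracket)
qed

end
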